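(* Let $-\beta\in(0,1)$ and $c\in(0,1)$, and let $n\geq 2$ be an integer. Denote the zeros of the monic Meixner polynomial $M_n(x;\beta,c)$ by $z_{1,n}<z_{2,n}<\dots<z_{n,n}$ (they are real and distinct). Then $$z_{1,n}<0<1<z_{2,n}.$$
   Context: Monic Meixner polynomials are defined by $$M_n(x;\beta,c)=\left(\frac{c}{c-1}\right)^n(\beta)_n\sum_{k=0}^{n}\frac{(-n)_k(-x)_k(1-\frac1c)^k}{(\beta)_k\,k!},$$ for real $\beta,c$ with $c\neq 0$ and $\beta\notin\{-1,-2,\dots,-n+1\}$, where $(\alpha)_0=1$ and $(\alpha)_k=\alpha(\alpha+1)\cdots(\alpha+k-1)$ for $k\geq1$. For $-\beta,c\in(0,1)$ and $n\ge 2$, the zeros of $M_n(x;\beta,c)$ are known to be real and distinct. *)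

theory Defs
  imports "HOL-Analysis.Analysis"
begin

definition meixner :: "nat \<Rightarrow> real \<Rightarrow> real \<Rightarrow> real \<Rightarrow> real" where
  "meixner n \<beta> c x =
     (c / (c - 1)) ^ n * pochhammer \<beta> n *
     (\<Sum>k=0..n. pochhammer (- real n) k * pochhammer (- x) k * (1 - 1 / c) ^ k
                 / (pochhammer \<beta> k * fact k))"

end

theory Submission
  imports Defs
begin

text \<open>Up to the nonzero factor \<open>(c/(c-1))^n (\<beta>)\<^sub>n\<close>, \<open>M\<^sub>n(x)\<close> equals
  \<open>F(x) = \<Sum>\<^sub>k C(n,k) (1/c - 1)^k (-x)\<^sub>k / (\<beta>)\<^sub>k\<close>. For \<open>-1 < \<beta> < 0\<close> every term is
  nonnegative on \<open>[0,1]\<close> and nondecreasing on \<open>(-\<infinity>,0]\<close>, the \<open>k = 1\<close> term being linear,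
  strictly increasing and unbounded below there. So \<open>F \<ge> 1\<close> on \<open>[0,1]\<close> and \<open>F\<close> has exactly one
  zero in \<open>(-\<infinity>,0]\<close>. Beyond \<open>1\<close>, orthogonality gives \<open>\<Sum>\<^sub>m w(m) m F(m) = 0\<close> for the
  Meixner weight \<open>w(m) = (\<beta>)\<^sub>m c^m / m!\<close>, which is negative for \<open>m \<ge> 1\<close>. As \<open>F(1) > 0\<close>, the
  term \<open>m = 1\<close> is negative, so \<open>F(m) < 0\<close> for some integer \<open>m \<ge> 2\<close>, and \<open>F\<close> has a least
  zero in \<open>(1, m)\<close>.\<close>

lemma pochhammer_nonneg_of_nonneg:
  fixes a :: "'a :: linordered_semidom"
  shows "0 \<le> a \<Longrightarrow> 0 \<le> pochhammer a k"
  unfolding pochhammer_prod by (intro prod_nonneg) simp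

lemma pochhammer_mono:
  fixes a b :: "'a :: linordered_semidom"
  shows "0 \<le> a \<Longrightarrow> a \<le> b \<Longrightarrow> pochhammer a k \<le> pochhammer b k"
  unfolding pochhammer_prod by (intro prod_mono) simp

lemma fact_add_pochhammer: "fact (j + k) = fact j * pochhammer (1 + real j) k"
  using pochhammer_product'[of "1 :: real" j k] by (simp add: pochhammer_fact)

lemma pochhammer_power_series_sums:
  fixes g c :: real
  assumes "\<bar>c\<bar> < 1"
  shows "(\<lambda>j. pochhammer g j * c ^ j / fact j) sums ((1 - c) powr (- g))"
proof -
  have "(\<lambda>j. ((- g) gchoose j) * (- c) ^ j) sums (1 + (- c)) powr (- g)"
    by (rule gen_binomial_real) (use assms in simp)
  moreover have "((- g) gchoose j) * (- c) ^ j = pochhammer g j * c ^ j / fact j" for j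
    by (simp add: gbinomial_pochhammer power_mult_distrib[symmetric])
  ultimately show ?thesis by simp
qed

lemma exists_least_zero:
  fixes f :: "real \<Rightarrow> real"
  assumes "continuous_on {a..b} f" "a \<le> b" "0 < f a" "f b < 0"
  shows "\<exists>z>a. f z = 0 \<and> (\<forall>x\<ge>a. f x = 0 \<longrightarrow> z \<le> x)"
proof -
  define S where "S = {x \<in> {a..b}. f x = 0}"
  have "S \<noteq> {}"
    using IVT2'[of f b 0 a] assms unfolding S_def by auto
  moreover have "compact ({a..b} \<inter> S)"
    unfolding S_def
    by (intro compact_Int_closed compact_Icc continuous_closed_preimage_constant assms(1) closed_atLeastAtMost)
  moreover have "{a..b} \<inter> S = S"
    unfolding S_def by auto
  ultimately obtain z where z: "z \<in> S" "\<forall>x\<in>S. z \<le> x"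
    using compact_attains_inf by metis
  then have "a < z"
    using assms(3) unfolding S_def by (cases "z = a") auto
  moreover have "z \<le> x" if "a \<le> x" "f x = 0" for x
    using z that unfolding S_def by (cases "x \<le> b") auto
  ultimately show ?thesis
    using z(1) unfolding S_def by auto
qed

definition meixner_weight :: "real \<Rightarrow> real \<Rightarrow> nat \<Rightarrow> real" where
  "meixner_weight \<beta> c m = pochhammer \<beta> m * c ^ m / fact m"

text \<open>The terms with \<open>m < k\<close> vanish, and after the shift \<open>m = j + k\<close> what remains is the
  binomial series of \<open>(1 - c) powr (-(\<beta> + k))\<close>.\<close>

lemma meixner_weight_pochhammer_sums:
  fixes \<beta> c :: real
  assumes "\<bar>c\<bar> < 1"
  shows "(\<lambda>m. meixner_weight \<beta> c m * pochhammer (- real m) k)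
           sums ((1 - c) powr (- \<beta>) * pochhammer \<beta> k * (c / (c - 1)) ^ k)"
proof -
  define F where "F m = meixner_weight \<beta> c m * pochhammer (- real m) k" for m
  have F_shift: "F (j + k) = (- c) ^ k * pochhammer \<beta> k * (pochhammer (\<beta> + k) j * c ^ j / fact j)"
    for j
  proof -
    have "pochhammer (- real (j + k)) k = (- 1) ^ k * pochhammer (1 + real j) k"
      using pochhammer_minus[of "real (j + k)" k] by (simp add: algebra_simps)
    moreover have "pochhammer (1 + real j) k > 0"
      by (rule pochhammer_pos) simp
    ultimately show ?thesis
      unfolding F_def meixner_weight_def fact_add_pochhammer
        pochhammer_product'[of \<beta> k j, simplified add.commute[of k j]]
      by (simp add: field_simps power_add power_mult_distrib[symmetric])
  qed
  have "(\<lambda>j. F (j + k)) sums ((- c) ^ k * pochhammer \<beta> k * (1 - c) powr (- (\<beta> + k)))"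
    unfolding F_shift by (intro sums_mult pochhammer_power_series_sums assms)
  then have "F sums ((- c) ^ k * pochhammer \<beta> k * (1 - c) powr (- (\<beta> + k)) + (\<Sum>i<k. F i))"
    by (rule iffD1[OF sums_iff_shift])
  moreover have "(\<Sum>i<k. F i) = 0"
    by (rule sum.neutral) (auto simp: F_def pochhammer_of_nat_eq_0_iff)
  moreover have "(- c) ^ k * (1 - c) powr (- (\<beta> + k)) = (1 - c) powr (- \<beta>) * (c / (c - 1)) ^ k"
  proof -
    have "(1 - c) powr (- (\<beta> + k)) = (1 - c) powr (- \<beta>) / (1 - c) ^ k"
      using assms by (simp add: powr_diff powr_realpow)
    moreover have "(- c) ^ k / (1 - c) ^ k = (c / (c - 1)) ^ k"
      unfolding power_divide[symmetric]
      by (rule arg_cong[where f = "\<lambda>t. t ^ k"]) (use assms in \<open>simp add: field_simps\<close>)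
    ultimately show ?thesis
      by (metis times_divide_eq_right mult.commute)
  qed
  ultimately have "F sums ((1 - c) powr (- \<beta>) * pochhammer \<beta> k * (c / (c - 1)) ^ k)"
    by (simp add: mult_ac)
  then show ?thesis
    by (simp add: F_def[abs_def])
qed

lemma meixner_weight_linear_pochhammer_sums:
  fixes \<beta> c :: real
  assumes "\<bar>c\<bar> < 1"
  shows "(\<lambda>m. meixner_weight \<beta> c m * real m * pochhammer (- real m) k)
           sums ((1 - c) powr (- \<beta>) * pochhammer \<beta> k * (c / (c - 1)) ^ k
                   * (real k - (\<beta> + real k) * (c / (c - 1))))"
proof -
  define q where "q = c / (c - 1)"
  have "meixner_weight \<beta> c m * real m * pochhammer (- real m) k =
      real k * (meixner_weight \<beta> c m * pochhammer (- real m) k)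
      - meixner_weight \<beta> c m * pochhammer (- real m) (Suc k)" for m
    by (simp add: pochhammer_Suc algebra_simps)
  moreover have "(\<lambda>m. real k * (meixner_weight \<beta> c m * pochhammer (- real m) k)
      - meixner_weight \<beta> c m * pochhammer (- real m) (Suc k))
      sums (real k * ((1 - c) powr (- \<beta>) * pochhammer \<beta> k * q ^ k)
            - (1 - c) powr (- \<beta>) * pochhammer \<beta> (Suc k) * q ^ Suc k)"
    unfolding q_def by (intro sums_diff sums_mult meixner_weight_pochhammer_sums assms)
  moreover have "real k * ((1 - c) powr (- \<beta>) * pochhammer \<beta> k * q ^ k)
        - (1 - c) powr (- \<beta>) * pochhammer \<beta> (Suc k) * q ^ Suc k
      = (1 - c) powr (- \<beta>) * pochhammer \<beta> k * q ^ k * (real k - (\<beta> + real k) * q)"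
    by (simp add: pochhammer_Suc algebra_simps)
  ultimately show ?thesis
    unfolding q_def by simp
qed

text \<open>The hypergeometric sum \<open>\<^sub>2F\<^sub>1(-n, -x; \<beta>; 1 - 1/c)\<close> of the definition of \<open>meixner\<close>,
  with \<open>(-n)\<^sub>k / k!\<close> written as \<open>(-1)^k C(n,k)\<close>.\<close>

definition meixner_hyp_term :: "nat \<Rightarrow> real \<Rightarrow> real \<Rightarrow> real \<Rightarrow> nat \<Rightarrow> real" where
  "meixner_hyp_term n \<beta> c x k =
     real (n choose k) * (1 / c - 1) ^ k * (pochhammer (- x) k / pochhammer \<beta> k)"

definition meixner_hyp :: "nat \<Rightarrow> real \<Rightarrow> real \<Rightarrow> real \<Rightarrow> real" where
  "meixner_hyp n \<beta> c x = (\<Sum>k\<le>n. meixner_hyp_term n \<beta> c x k)"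

lemma meixner_eq_meixner_hyp:
  "meixner n \<beta> c x = (c / (c - 1)) ^ n * pochhammer \<beta> n * meixner_hyp n \<beta> c x"
proof -
  have "pochhammer (- real n) k * (1 - 1 / c) ^ k / fact k = real (n choose k) * (1 / c - 1) ^ k"
    for k
    using gbinomial_pochhammer[of "real n" k]
    by (simp add: binomial_gbinomial power_mult_distrib[symmetric])
  then show ?thesis
    unfolding meixner_def meixner_hyp_def meixner_hyp_term_def atLeast0AtMost
    by (intro arg_cong2[where f = "(*)"] refl sum.cong) (simp_all add: field_simps)
qed

lemma continuous_on_meixner_hyp: "continuous_on S (meixner_hyp n \<beta> c)"
  unfolding meixner_hyp_def meixner_hyp_term_def divide_inverse by (intro continuous_intros)

lemma meixner_hyp_term_0 [simp]: "meixner_hyp_term n \<beta> c x 0 = 1"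
  by (simp add: meixner_hyp_term_def)

lemma meixner_hyp_term_1: "meixner_hyp_term n \<beta> c x 1 = real n * (1 / c - 1) * (- x / \<beta>)"
  by (simp add: meixner_hyp_term_def)

lemma meixner_hyp_0: "meixner_hyp n \<beta> c 0 = 1"
  unfolding meixner_hyp_def meixner_hyp_term_def by (simp add: pochhammer_0_left sum.atMost_shift)

lemma meixner_hyp_orthogonal_linear:
  fixes \<beta> c :: real
  assumes "2 \<le> n" "c \<noteq> 0" "\<bar>c\<bar> < 1" "pochhammer \<beta> n \<noteq> 0"
  shows "(\<lambda>m. meixner_weight \<beta> c m * real m * meixner_hyp n \<beta> c (real m)) sums 0"
proof -
  define p where "p = 1 / c - 1"
  define q where "q = c / (c - 1)"
  define a where "a k = real (n choose k) * p ^ k / pochhammer \<beta> k" for k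
  have "(\<lambda>m. \<Sum>k\<le>n. a k * (meixner_weight \<beta> c m * real m * pochhammer (- real m) k))
      sums (\<Sum>k\<le>n. a k * ((1 - c) powr (- \<beta>) * pochhammer \<beta> k * q ^ k * (real k - (\<beta> + real k) * q)))"
    unfolding q_def by (intro sums_sum sums_mult meixner_weight_linear_pochhammer_sums assms)
  moreover have "a k * ((1 - c) powr (- \<beta>) * pochhammer \<beta> k * q ^ k * (real k - (\<beta> + real k) * q))
      = (1 - c) powr (- \<beta>) * ((1 - q) * ((- 1) ^ k * real k * real (n choose k))
          - \<beta> * q * ((- 1) ^ k * real (n choose k)))" if "k \<le> n" for k
  proof -
    have "pochhammer \<beta> k \<noteq> 0"
      using pochhammer_neq_0_mono[OF assms(4) that] .
    then have "a k * ((1 - c) powr (- \<beta>) * pochhammer \<beta> k * q ^ k * (real k - (\<beta> + real k) * q))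
        = (1 - c) powr (- \<beta>) * real (n choose k) * (p * q) ^ k * (real k - (\<beta> + real k) * q)"
      unfolding a_def by (simp add: power_mult_distrib)
    also have "p * q = - 1"
      using assms(2,3) by (simp add: p_def q_def field_simps)
    finally show ?thesis
      by (simp add: algebra_simps)
  qed
  moreover have "meixner_weight \<beta> c m * real m * meixner_hyp n \<beta> c (real m) =
      (\<Sum>k\<le>n. a k * (meixner_weight \<beta> c m * real m * pochhammer (- real m) k))" for m
    by (simp add: meixner_hyp_def meixner_hyp_term_def a_def p_def sum_distrib_left mult_ac)
  moreover have "(\<Sum>k\<le>n. (- 1) ^ k * real k * real (n choose k)) = 0"
    using choose_alternating_linear_sum[of n] assms(1) by simp
  moreover have "(\<Sum>k\<le>n. (- 1) ^ k * real (n choose k)) = 0"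
    using choose_alternating_sum[of n] assms(1) by simp
  ultimately show ?thesis
    by (simp add: sum_distrib_left[symmetric] sum_subtractf)
qed

context
  fixes \<beta> c :: real
  assumes \<beta>_gt_minus_one: "- 1 < \<beta>" and \<beta>_neg: "\<beta> < 0" and c_pos: "0 < c" and c_lt_one: "c < 1"
begin

lemma pochhammer_param_neg: "1 \<le> k \<Longrightarrow> pochhammer \<beta> k < 0"
proof (cases k)
  case (Suc j)
  have "0 < pochhammer (\<beta> + 1) j"
    using \<beta>_gt_minus_one by (intro pochhammer_pos) simp
  then show ?thesis
    using \<beta>_neg by (simp add: Suc pochhammer_rec mult_neg_pos)
qed simp

lemma pochhammer_ratio_nonneg:
  assumes "0 \<le> x" "x \<le> 1"
  shows "0 \<le> pochhammer (- x) k / pochhammer \<beta> k"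
proof (cases k)
  case (Suc j)
  have "0 \<le> pochhammer (1 - x) j"
    using assms by (intro pochhammer_nonneg_of_nonneg) simp
  then have "pochhammer (- x) k \<le> 0"
    using assms by (simp add: Suc pochhammer_rec mult_nonpos_nonneg)
  then show ?thesis
    using pochhammer_param_neg[of k] Suc by (simp add: divide_nonpos_neg)
qed simp

lemma pochhammer_ratio_mono:
  assumes "x \<le> y" "y \<le> 0"
  shows "pochhammer (- x) k / pochhammer \<beta> k \<le> pochhammer (- y) k / pochhammer \<beta> k"
proof (cases "k = 0")
  case False
  have "pochhammer (- y) k \<le> pochhammer (- x) k"
    using assms by (intro pochhammer_mono) simp_all
  then show ?thesis
    using pochhammer_param_neg[of k] False by (intro divide_right_mono_neg) simp_all
qed simp

lemma one_div_c_minus_one_pos: "0 < 1 / c - 1"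
  using c_pos c_lt_one by (simp add: field_simps)

lemma meixner_hyp_term_nonneg:
  "0 \<le> x \<Longrightarrow> x \<le> 1 \<Longrightarrow> 0 \<le> meixner_hyp_term n \<beta> c x k"
  unfolding meixner_hyp_term_def using one_div_c_minus_one_pos
  by (intro mult_nonneg_nonneg pochhammer_ratio_nonneg) simp_all

lemma meixner_hyp_term_mono:
  "x \<le> y \<Longrightarrow> y \<le> 0 \<Longrightarrow> meixner_hyp_term n \<beta> c x k \<le> meixner_hyp_term n \<beta> c y k"
  unfolding meixner_hyp_term_def using one_div_c_minus_one_pos
  by (intro mult_left_mono pochhammer_ratio_mono) simp_all

lemma meixner_hyp_term_nonpos:
  assumes "x \<le> 0" "1 \<le> k"
  shows "meixner_hyp_term n \<beta> c x k \<le> 0"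
proof -
  have "meixner_hyp_term n \<beta> c 0 k = 0"
    using assms(2) by (simp add: meixner_hyp_term_def pochhammer_0_left)
  then show ?thesis
    using meixner_hyp_term_mono[OF assms(1) order_refl, of n k] by simp
qed

lemma meixner_hyp_ge_1:
  assumes "0 \<le> x" "x \<le> 1"
  shows "1 \<le> meixner_hyp n \<beta> c x"
  unfolding meixner_hyp_def
  using member_le_sum[of 0 "{..n}" "meixner_hyp_term n \<beta> c x"] meixner_hyp_term_nonneg[OF assms]
  by simp

lemma meixner_hyp_strict_mono_nonpos:
  assumes "1 \<le> n" "x < y" "y \<le> 0"
  shows "meixner_hyp n \<beta> c x < meixner_hyp n \<beta> c y"
  unfolding meixner_hyp_def
proof (rule sum_strict_mono_ex1)
  show "\<forall>k\<in>{..n}. meixner_hyp_term n \<beta> c x k \<le> meixner_hyp_term n \<beta> c y k"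
    using assms by (intro ballI meixner_hyp_term_mono) simp_all
  have "- x / \<beta> < - y / \<beta>"
    using assms \<beta>_neg by (simp add: divide_strict_right_mono_neg)
  then have "meixner_hyp_term n \<beta> c x 1 < meixner_hyp_term n \<beta> c y 1"
    unfolding meixner_hyp_term_1 using assms(1) one_div_c_minus_one_pos
    by (intro mult_strict_left_mono) simp_all
  then show "\<exists>k\<in>{..n}. meixner_hyp_term n \<beta> c x k < meixner_hyp_term n \<beta> c y k"
    using assms(1) by (intro bexI[of _ 1]) simp_all
qed simp

lemma meixner_hyp_le_linear:
  assumes "1 \<le> n" "x \<le> 0"
  shows "meixner_hyp n \<beta> c x \<le> 1 + real n * (1 / c - 1) * (- x / \<beta>)"
proof -
  let ?t = "meixner_hyp_term n \<beta> c x"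
  have "sum ?t ({..n} - {0, 1}) \<le> 0"
    using assms(2) by (intro sum_nonpos meixner_hyp_term_nonpos) auto
  moreover have "sum ?t {..n} = sum ?t ({..n} - {0, 1}) + sum ?t {0, 1}"
    using assms(1) by (intro sum.subset_diff) auto
  moreover have "sum ?t {0, 1} = 1 + real n * (1 / c - 1) * (- x / \<beta>)"
    using meixner_hyp_term_1[of n \<beta> c x] by simp
  ultimately show ?thesis
    unfolding meixner_hyp_def by linarith
qed

lemma meixner_hyp_unique_nonpos_zero:
  assumes "1 \<le> n"
  shows "\<exists>z<0. meixner_hyp n \<beta> c z = 0 \<and> (\<forall>x\<le>0. meixner_hyp n \<beta> c x = 0 \<longrightarrow> x = z)"
proof -
  define p where "p = real n * (1 / c - 1)"
  have "0 < p"
    unfolding p_def using assms one_div_c_minus_one_pos by simp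
  define x0 where "x0 = 2 * \<beta> / p"
  have "x0 < 0"
    using \<open>0 < p\<close> \<beta>_neg by (simp add: x0_def divide_neg_pos)
  moreover have "p * (- x0 / \<beta>) = - 2"
    using \<open>0 < p\<close> \<beta>_neg by (simp add: x0_def field_simps)
  ultimately have "meixner_hyp n \<beta> c x0 < 0"
    using meixner_hyp_le_linear[OF assms, of x0] by (simp add: p_def)
  then obtain z where z: "x0 \<le> z" "z \<le> 0" "meixner_hyp n \<beta> c z = 0"
    using IVT'[of "meixner_hyp n \<beta> c" x0 0 0] \<open>x0 < 0\<close>
    by (auto simp: meixner_hyp_0 continuous_on_meixner_hyp)
  then have "z < 0"
    using meixner_hyp_0[of n \<beta> c] by (cases "z = 0") auto
  moreover have "x = z" if "x \<le> 0" "meixner_hyp n \<beta> c x = 0" for x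
  proof (rule ccontr)
    assume "x \<noteq> z"
    then consider "x < z" | "z < x"
      by linarith
    then show False
    proof cases
      case 1
      then show False
        using meixner_hyp_strict_mono_nonpos[OF assms 1 z(2)] z(3) that(2) by simp
    next
      case 2
      then show False
        using meixner_hyp_strict_mono_nonpos[OF assms 2 that(1)] z(3) that(2) by simp
    qed
  qed
  ultimately show ?thesis
    using z(3) by blast
qed

lemma meixner_weight_neg: "1 \<le> m \<Longrightarrow> meixner_weight \<beta> c m < 0"
  unfolding meixner_weight_def using pochhammer_param_neg[of m] c_pos
  by (simp add: divide_neg_pos mult_neg_pos)

lemma meixner_hyp_neg_at_nat:
  assumes "2 \<le> n"
  shows "\<exists>m\<ge>2. meixner_hyp n \<beta> c (real m) < 0"
proof (rule ccontr)
  assume "\<not> ?thesis"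
  then have hyp_nonneg: "0 \<le> meixner_hyp n \<beta> c (real m)" if "2 \<le> m" for m
    using that by (simp add: not_less)
  define f where "f m = meixner_weight \<beta> c m * real m * meixner_hyp n \<beta> c (real m)" for m
  have "pochhammer \<beta> n \<noteq> 0"
    using pochhammer_param_neg[of n] assms by simp
  then have "f sums 0"
    unfolding f_def using assms c_pos c_lt_one by (intro meixner_hyp_orthogonal_linear) simp_all
  have "f 1 < 0"
    using meixner_weight_neg[of 1] meixner_hyp_ge_1[of 1 n]
    by (simp add: f_def mult_neg_pos)
  have f_le: "f m \<le> (if m = 1 then f 1 else 0)" for m
  proof (cases "2 \<le> m")
    case True
    then show ?thesis
      using meixner_weight_neg[of m] hyp_nonneg[OF True]
      by (simp add: f_def mult_nonpos_nonneg)
  next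
    case False
    then have "m = 0 \<or> m = 1" by auto
    then show ?thesis by (auto simp: f_def)
  qed
  have "0 \<le> f 1"
    by (rule sums_le[OF f_le \<open>f sums 0\<close> sums_single])
  with \<open>f 1 < 0\<close> show False by simp
qed

end

theorem proposition3p1:
  fixes \<beta> c :: real and n :: nat
  assumes "0 < - \<beta>" "- \<beta> < 1" "0 < c" "c < 1" "n \<ge> 2"
  shows "\<exists>z1 z2. meixner n \<beta> c z1 = 0 \<and> meixner n \<beta> c z2 = 0 \<and> z1 < z2
            \<and> (\<forall>x. meixner n \<beta> c x = 0 \<longrightarrow> x = z1 \<or> z2 \<le> x)
            \<and> z1 < 0 \<and> 1 < z2"
proof -
  have \<beta>: "- 1 < \<beta>" "\<beta> < 0"
    using assms(1,2) by simp_all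
  note params = \<beta> assms(3,4)
  let ?F = "meixner_hyp n \<beta> c"
  have "(c / (c - 1)) ^ n * pochhammer \<beta> n \<noteq> 0"
    using pochhammer_param_neg[OF params, of n] assms by simp
  then have zero_iff: "meixner n \<beta> c x = 0 \<longleftrightarrow> ?F x = 0" for x
    using assms(3,4) by (simp add: meixner_eq_meixner_hyp)
  obtain z1 where z1: "z1 < 0" "?F z1 = 0" "\<forall>x\<le>0. ?F x = 0 \<longrightarrow> x = z1"
    using meixner_hyp_unique_nonpos_zero[OF params, of n] assms(5) by auto
  obtain m :: nat where "2 \<le> m" "?F (real m) < 0"
    using meixner_hyp_neg_at_nat[OF params assms(5)] by blast
  moreover have "0 < ?F 1"
    using meixner_hyp_ge_1[OF params, of 1 n] by simp
  ultimately have "\<exists>z>1. ?F z = 0 \<and> (\<forall>x\<ge>1. ?F x = 0 \<longrightarrow> z \<le> x)"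
    by (intro exists_least_zero[where b = "real m"] continuous_on_meixner_hyp) simp_all
  then obtain z2 where z2: "1 < z2" "?F z2 = 0" "\<forall>x\<ge>1. ?F x = 0 \<longrightarrow> z2 \<le> x"
    by blast
  have zeros: "x = z1 \<or> z2 \<le> x" if "?F x = 0" for x
  proof -
    consider "x \<le> 0" | "0 < x" "x \<le> 1" | "1 \<le> x"
      by linarith
    then show ?thesis
    proof cases
      case 2
      then show ?thesis
        using meixner_hyp_ge_1[OF params, of x n] that by simp
    qed (use z1(3) z2(3) that in auto)
  qed
  show ?thesis
    unfolding zero_iff using z1(1,2) z2(1,2) zeros by (intro exI[of _ z1] exI[of _ z2]) auto
qed

end
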